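(* Let $\mathcal{H}$ be a real Hilbert space, let $A\colon \mathcal{H}\rightrightarrows\mathcal{H}$ be maximally monotone, let $B\colon \mathcal{H}\to\mathcal{H}$ be monotone and $L$-Lipschitz, and suppose that $(A+B)^{-1}(0)\neq\varnothing$. Choose $\lambda\in \left(0,\frac{1}{2L}\right)$. Given $x_0,x_{-1}\in\mathcal{H}$, define the sequence $(x_k)$ by $$x_{k+1} = J_{\lambda A}\bigl(x_k - 2\lambda B(x_k) +\lambda B(x_{k-1})\bigr) \quad\forall k\in\mathbb{N}.$$ Then $(x_k)$ converges weakly to a point contained in $(A+B)^{-1}(0)$.
   Context: $J_{\lambda A}:=(I+\lambda A)^{-1}$ denotes the resolvent. *)

theory Defs
  imports "HOL-Analysis.Analysis"
begin

text \<open>Set-valued operators on a real Hilbert space are modelled as functions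
  A :: 'a => 'a set (A x is the image set; the graph is {(x,u). u \<in> A x}).\<close>

definition monotone_op :: "('a::real_inner \<Rightarrow> 'a set) \<Rightarrow> bool" where
  "monotone_op A \<longleftrightarrow> (\<forall>x y u v. u \<in> A x \<longrightarrow> v \<in> A y \<longrightarrow> 0 \<le> inner (x - y) (u - v))"

definition maximally_monotone :: "('a::real_inner \<Rightarrow> 'a set) \<Rightarrow> bool" where
  "maximally_monotone A \<longleftrightarrow> monotone_op A \<and>
     (\<forall>A'. monotone_op A' \<and> (\<forall>x. A x \<subseteq> A' x) \<longrightarrow> A' = A)"

definition monotone_fun :: "('a::real_inner \<Rightarrow> 'a) \<Rightarrow> bool" where
  "monotone_fun B \<longleftrightarrow> (\<forall>x y. 0 \<le> inner (x - y) (B x - B y))"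

text \<open>Resolvent J_{lam A} = (I + lam A)^{-1}, as a set-valued map:
  p \<in> J y iff y \<in> p + lam A p.\<close>
definition resolvent :: "real \<Rightarrow> ('a::real_inner \<Rightarrow> 'a set) \<Rightarrow> 'a \<Rightarrow> 'a set" where
  "resolvent lam A y = {p. \<exists>a \<in> A p. y = p + lam *\<^sub>R a}"

definition zeros_sum :: "('a::real_inner \<Rightarrow> 'a set) \<Rightarrow> ('a \<Rightarrow> 'a) \<Rightarrow> 'a set" where
  "zeros_sum A B = {z. \<exists>a \<in> A z. a + B z = 0}"

definition weakly_converges :: "(nat \<Rightarrow> 'a::real_inner) \<Rightarrow> 'a \<Rightarrow> bool" where
  "weakly_converges x p \<longleftrightarrow> (\<forall>y. (\<lambda>k. inner (x k) y) \<longlonglongrightarrow> inner p y)"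

end

(* Fix a zero z of A + B and let a_k be the element of A x_{k+1} produced by the resolvent step.
   Adding the monotonicity inequalities of A and B between x_{k+1} and z, and absorbing the
   reflected term by Young's inequality, shows that
     E_k = |x_k - z|^2 - 2 lam <x_k - z, B x_k - B x_{k-1}> + lam L |x_k - x_{k-1}|^2
   decreases by at least (1 - 2 lam L) |x_{k+1} - x_k|^2 per step, while
   E_k >= (1 - lam L) |x_k - z|^2.  Hence x_{k+1} - x_k -> 0, |x_k - z| converges for every zero z,
   and a_k + B x_{k+1} -> 0.  Maximality of A, together with Minty's trick for the continuous
   monotone B, makes every weak sequential cluster point a zero of A + B, and Opial's lemma gives
   weak convergence.  Weak sequential compactness of bounded sequences comes from a diagonal
   subsequence along which <x_k, w> converges on a closed subspace, the Riesz representation of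
   the limit functional there, and the orthogonal projection onto that subspace. *)

theory Submission
  imports Defs "HOL-Library.Diagonal_Subsequence"
begin

section \<open>Minimizers, projections and Riesz representation\<close>

lemma quadratic_nonneg_imp_linear_coeff_zero:
  fixes a b :: real
  assumes "\<And>t. 0 \<le> t * a + t\<^sup>2 * b"
  shows "a = 0"
proof (rule ccontr)
  assume "a \<noteq> 0"
  define s where "s = 1 / (\<bar>b\<bar> + 1)"
  have s: "0 < s" "s * b < 1"
    unfolding s_def by (auto simp: field_simps)
  have "0 \<le> (- a * s) * a + (- a * s)\<^sup>2 * b"
    by (rule assms)
  also have "\<dots> = a\<^sup>2 * s * (s * b - 1)"
    by (simp add: power2_eq_square algebra_simps)
  also have "\<dots> < 0"
    using s \<open>a \<noteq> 0\<close> by (simp add: mult_pos_neg)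
  finally show False by simp
qed

lemma norm_add_scaleR_power2:
  fixes d w :: "'a::real_inner"
  shows "(norm (d + t *\<^sub>R w))\<^sup>2 = (norm d)\<^sup>2 + t * (2 * inner d w) + t\<^sup>2 * (norm w)\<^sup>2"
  unfolding power2_norm_eq_inner
  by (simp add: inner_commute algebra_simps power2_eq_square)

lemma dist_midpoint_power2:
  fixes y z w :: "'a::real_inner"
  shows "(dist y (midpoint z w))\<^sup>2 = ((dist y z)\<^sup>2 + (dist y w)\<^sup>2) / 2 - (dist z w)\<^sup>2 / 4"
  unfolding dist_norm power2_norm_eq_inner midpoint_def
  by (simp add: inner_commute algebra_simps) (simp add: field_simps)

lemma tendsto_inner_Bseq_zero:
  fixes x v :: "nat \<Rightarrow> 'a::real_inner"
  assumes "Bseq x" and "v \<longlonglongrightarrow> 0"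
  shows "(\<lambda>j. inner (x j) (v j)) \<longlonglongrightarrow> 0"
  using bounded_bilinear.Bfun_prod_Zfun[OF bounded_bilinear_inner, of x sequentially v] assms
  by (simp add: tendsto_Zfun_iff)

lemma strongly_midpoint_convex_has_minimizer:
  fixes h :: "'a::{real_normed_vector,complete_space} \<Rightarrow> real"
  assumes "closed C" and "C \<noteq> {}"
    and mid_mem: "\<And>z w. z \<in> C \<Longrightarrow> w \<in> C \<Longrightarrow> midpoint z w \<in> C"
    and mid_le: "\<And>z w. z \<in> C \<Longrightarrow> w \<in> C \<Longrightarrow>
                   h (midpoint z w) \<le> (h z + h w) / 2 - (dist z w)\<^sup>2 / 4"
    and bounded_below: "\<And>z. z \<in> C \<Longrightarrow> c \<le> h z"
    and "continuous_on C h"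
  shows "\<exists>p\<in>C. \<forall>z\<in>C. h p \<le> h z"
proof -
  define d where "d = Inf (h ` C)"
  have bdd: "bdd_below (h ` C)"
    using bounded_below unfolding bdd_below_def by auto
  have d_le: "d \<le> h z" if "z \<in> C" for z
    unfolding d_def using bdd that by (simp add: cInf_lower)
  have "\<exists>z\<in>C. h z < d + inverse (Suc n)" for n
    using cInf_less_iff[OF _ bdd, of "d + inverse (Suc n)"] \<open>C \<noteq> {}\<close> by (simp add: d_def)
  then obtain s where s_mem: "\<And>n. s n \<in> C" and s_lt: "\<And>n. h (s n) < d + inverse (Suc n)"
    by metis
  have dist_s: "(dist (s m) (s n))\<^sup>2 < 2 * inverse (Suc m) + 2 * inverse (Suc n)" for m n
    using mid_le[OF s_mem s_mem, of m n] d_le[OF mid_mem[OF s_mem s_mem, of m n]] s_lt[of m] s_lt[of n]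
    by argo
  have "Cauchy s"
  proof (rule metric_CauchyI)
    fix e :: real
    assume "0 < e"
    then obtain N where N: "inverse (Suc N) < e\<^sup>2 / 4"
      using reals_Archimedean by (metis zero_less_divide_iff zero_less_numeral zero_less_power)
    have "dist (s m) (s n) < e" if "N \<le> m" "N \<le> n" for m n
    proof -
      have "inverse (Suc m) \<le> inverse (Suc N)" "inverse (Suc n) \<le> inverse (Suc N)"
        using that by (simp_all add: field_simps)
      then have "(dist (s m) (s n))\<^sup>2 < e\<^sup>2"
        using dist_s[of m n] N by linarith
      then show ?thesis
        using \<open>0 < e\<close> by (simp add: power_less_imp_less_base)
    qed
    then show "\<exists>N. \<forall>m\<ge>N. \<forall>n\<ge>N. dist (s m) (s n) < e"
      by blast
  qed
  then obtain p where s_lim: "s \<longlonglongrightarrow> p"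
    using Cauchy_convergent_iff convergent_def by blast
  have "p \<in> C"
    using closed_sequentially[OF \<open>closed C\<close> s_mem s_lim] .
  have "(\<lambda>n. h (s n)) \<longlonglongrightarrow> h p"
    using \<open>continuous_on C h\<close> s_mem s_lim \<open>p \<in> C\<close>
    by (auto simp: continuous_on_sequentially o_def)
  moreover have "(\<lambda>n. d + inverse (Suc n)) \<longlonglongrightarrow> d"
    using tendsto_add[OF tendsto_const LIMSEQ_inverse_real_of_nat, of d] by simp
  ultimately have "h p \<le> d"
    using s_lt by (intro LIMSEQ_le) (auto intro: less_imp_le)
  then show ?thesis
    using \<open>p \<in> C\<close> d_le by force
qed

lemma subspace_midpoint: "subspace W \<Longrightarrow> z \<in> W \<Longrightarrow> w \<in> W \<Longrightarrow> midpoint z w \<in> W"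
  by (simp add: midpoint_def subspace_add subspace_scale)

lemma orthogonal_projection_exists:
  fixes W :: "'a::{real_inner,complete_space} set"
  assumes "closed W" and "subspace W"
  shows "\<exists>q\<in>W. \<forall>w\<in>W. inner (y - q) w = 0"
proof -
  have "continuous_on W (\<lambda>z. (dist y z)\<^sup>2)"
    by (intro continuous_intros)
  then have "\<exists>q\<in>W. \<forall>z\<in>W. (dist y q)\<^sup>2 \<le> (dist y z)\<^sup>2"
    using \<open>closed W\<close> subspace_0[OF \<open>subspace W\<close>] subspace_midpoint[OF \<open>subspace W\<close>]
    by (intro strongly_midpoint_convex_has_minimizer[where c = 0]) (auto simp: dist_midpoint_power2)
  then obtain q where "q \<in> W" and q_min: "\<And>z. z \<in> W \<Longrightarrow> (dist y q)\<^sup>2 \<le> (dist y z)\<^sup>2"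
    by blast
  have "2 * inner (y - q) w = 0" if "w \<in> W" for w
  proof (rule quadratic_nonneg_imp_linear_coeff_zero[where b = "(norm w)\<^sup>2"])
    fix t :: real
    have "q - t *\<^sub>R w \<in> W"
      using \<open>subspace W\<close> \<open>q \<in> W\<close> \<open>w \<in> W\<close> by (simp add: subspace_diff subspace_scale)
    then have "(norm (y - q))\<^sup>2 \<le> (norm ((y - q) + t *\<^sub>R w))\<^sup>2"
      using q_min by (fastforce simp: dist_norm algebra_simps)
    then show "0 \<le> t * (2 * inner (y - q) w) + t\<^sup>2 * (norm w)\<^sup>2"
      by (simp add: norm_add_scaleR_power2)
  qed
  with \<open>q \<in> W\<close> show ?thesis by auto
qed

lemma lipschitz_on_additive_bounded:
  fixes f :: "'a::real_normed_vector \<Rightarrow> real"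
  assumes "subspace W"
    and add: "\<And>z w. z \<in> W \<Longrightarrow> w \<in> W \<Longrightarrow> f (z + w) = f z + f w"
    and bound: "\<And>z. z \<in> W \<Longrightarrow> \<bar>f z\<bar> \<le> K * norm z"
  shows "\<bar>K\<bar>-lipschitz_on W f"
proof (rule lipschitz_onI)
  fix z w
  assume "z \<in> W" "w \<in> W"
  then have "z - w \<in> W"
    using \<open>subspace W\<close> by (simp add: subspace_diff)
  then have "f z = f (z - w) + f w"
    using add[OF _ \<open>w \<in> W\<close>] by (metis diff_add_cancel)
  moreover have "\<bar>f (z - w)\<bar> \<le> \<bar>K\<bar> * norm (z - w)"
    using bound[OF \<open>z - w \<in> W\<close>] mult_right_mono[OF abs_ge_self norm_ge_zero, of K "z - w"] by linarith
  ultimately show "dist (f z) (f w) \<le> \<bar>K\<bar> * dist z w"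
    by (simp add: dist_real_def dist_norm)
qed simp

lemma riesz_representation_subspace:
  fixes W :: "'a::{real_inner,complete_space} set"
  assumes "closed W" and "subspace W"
    and add: "\<And>z w. z \<in> W \<Longrightarrow> w \<in> W \<Longrightarrow> f (z + w) = f z + f w"
    and scale: "\<And>c z. z \<in> W \<Longrightarrow> f (c *\<^sub>R z) = c * f z"
    and bound: "\<And>z. z \<in> W \<Longrightarrow> \<bar>f z\<bar> \<le> K * norm z"
  shows "\<exists>p\<in>W. \<forall>w\<in>W. f w = inner p w"
proof -
  define h where "h z = (norm z)\<^sup>2 - 2 * f z" for z
  have f_mid: "f (midpoint z w) = (f z + f w) / 2" if "z \<in> W" "w \<in> W" for z w
    using that add scale[of "z + w"] \<open>subspace W\<close> by (simp add: midpoint_def subspace_add)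
  have "\<bar>K\<bar>-lipschitz_on W f"
    using \<open>subspace W\<close> add bound by (rule lipschitz_on_additive_bounded)
  then have h_cont: "continuous_on W h"
    unfolding h_def by (intro continuous_intros lipschitz_on_continuous_on)
  have h_lower: "- K\<^sup>2 \<le> h z" if "z \<in> W" for z
  proof -
    have "f z \<le> \<bar>K\<bar> * norm z"
      using bound[OF that] mult_right_mono[OF abs_ge_self norm_ge_zero, of K z] by linarith
    moreover have "0 \<le> (norm z - \<bar>K\<bar>)\<^sup>2" by simp
    ultimately show ?thesis
      unfolding h_def by (simp add: power2_eq_square algebra_simps)
  qed
  have h_mid: "h (midpoint z w) \<le> (h z + h w) / 2 - (dist z w)\<^sup>2 / 4" if "z \<in> W" "w \<in> W" for z w
  proof -
    have "h (midpoint z w) = ((norm z)\<^sup>2 + (norm w)\<^sup>2) / 2 - (dist z w)\<^sup>2 / 4 - (f z + f w)"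
      using dist_midpoint_power2[of 0 z w, unfolded dist_0_norm] f_mid[OF that] unfolding h_def by simp
    then show ?thesis
      unfolding h_def by simp
  qed
  have "W \<noteq> {}"
    using subspace_0[OF \<open>subspace W\<close>] by blast
  obtain p where "p \<in> W" and p_min: "\<And>z. z \<in> W \<Longrightarrow> h p \<le> h z"
    using strongly_midpoint_convex_has_minimizer[OF \<open>closed W\<close> \<open>W \<noteq> {}\<close>
        subspace_midpoint[OF \<open>subspace W\<close>] h_mid h_lower h_cont]
    by blast
  have "f w = inner p w" if "w \<in> W" for w
  proof -
    have "inner p w - f w = 0"
    proof (rule quadratic_nonneg_imp_linear_coeff_zero[where b = "(norm w)\<^sup>2 / 2"])
      fix t :: real
      have "p + t *\<^sub>R w \<in> W"
        using \<open>subspace W\<close> \<open>p \<in> W\<close> \<open>w \<in> W\<close> by (simp add: subspace_add subspace_scale)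
      then have "h p \<le> h (p + t *\<^sub>R w)"
        by (rule p_min)
      then show "0 \<le> t * (inner p w - f w) + t\<^sup>2 * ((norm w)\<^sup>2 / 2)"
        using add[OF \<open>p \<in> W\<close>, of "t *\<^sub>R w"] scale[OF \<open>w \<in> W\<close>, of t]
          \<open>subspace W\<close> \<open>w \<in> W\<close>
        unfolding h_def norm_add_scaleR_power2 by (simp add: subspace_scale algebra_simps)
    qed
    then show ?thesis by simp
  qed
  with \<open>p \<in> W\<close> show ?thesis by blast
qed

section \<open>Weak sequential compactness\<close>

lemma Bseq_inner_left:
  fixes x :: "nat \<Rightarrow> 'a::real_inner"
  assumes "Bseq x"
  shows "Bseq (\<lambda>j. inner (x j) w)"
proof -
  obtain K where K: "\<And>j. norm (x j) \<le> K"
    using assms BseqE by metis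
  have "norm (inner (x j) w) \<le> K * norm w" for j
  proof -
    have "norm (inner (x j) w) \<le> norm (x j) * norm w"
      using Cauchy_Schwarz_ineq2 by simp
    also have "\<dots> \<le> K * norm w"
      using K by (simp add: mult_right_mono)
    finally show ?thesis .
  qed
  then show ?thesis
    by (rule BseqI')
qed

lemma Bseq_inner_diagonal_subseq:
  fixes x :: "nat \<Rightarrow> 'a::real_inner"
  assumes "Bseq x"
  shows "\<exists>r. strict_mono r \<and> (\<forall>m. convergent (\<lambda>j. inner (x (r j)) (x m)))"
proof -
  interpret subseqs "\<lambda>m s. convergent (\<lambda>j. inner (x (s j)) (x m))"
  proof
    fix m and s :: "nat \<Rightarrow> nat"
    have "Bseq (\<lambda>j. inner (x (s j)) (x m))"
      using Bseq_inner_left[OF Bseq_subseq[OF assms]] .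
    then obtain l r' where "strict_mono r'" and "((\<lambda>j. inner (x (s j)) (x m)) \<circ> r') \<longlonglongrightarrow> l"
      using bounded_imp_convergent_subsequence by (metis Bseq_eq_bounded)
    then show "\<exists>r'. strict_mono r' \<and> convergent (\<lambda>j. inner (x ((s \<circ> r') j)) (x m))"
      by (auto simp: convergent_def o_def)
  qed
  have "convergent (\<lambda>j. inner (x (diagseq j)) (x m))" for m
  proof -
    have "convergent (\<lambda>j. inner (x ((diagseq \<circ> (+) (Suc m)) j)) (x m))"
      by (rule diagseq_holds) (auto dest: convergent_subseq_convergent simp: o_def)
    then show ?thesis
      using convergent_ignore_initial_segment[of "\<lambda>j. inner (x (diagseq j)) (x m)" "Suc m"]
      by (simp add: o_def add.commute)
  qed
  then show ?thesis
    using subseq_diagseq by blast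
qed

lemma subspace_inner_convergent: "subspace {w. convergent (\<lambda>j. inner (x j) w)}"
  unfolding subspace_def
  by (auto simp: inner_add_right intro: convergent_const convergent_add convergent_mult[OF convergent_const])

lemma closed_inner_convergent:
  fixes x :: "nat \<Rightarrow> 'a::real_inner"
  assumes "Bseq x"
  shows "closed {w. convergent (\<lambda>j. inner (x j) w)}"
  unfolding closed_sequential_limits
proof (intro allI impI, elim conjE)
  fix s l
  assume s_mem: "\<forall>n. s n \<in> {w. convergent (\<lambda>j. inner (x j) w)}" and "s \<longlonglongrightarrow> l"
  obtain K where "0 < K" and K: "\<And>j. norm (x j) \<le> K"
    using assms BseqE by metis
  have "Cauchy (\<lambda>j. inner (x j) l)"
  proof (rule metric_CauchyI)
    fix e :: real
    assume "0 < e"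
    then obtain n where n: "norm (s n - l) < e / (3 * K)"
      using LIMSEQ_D[OF \<open>s \<longlonglongrightarrow> l\<close>, of "e / (3 * K)"] \<open>0 < K\<close> by auto
    have close: "\<bar>inner (x j) (s n) - inner (x j) l\<bar> < e / 3" for j
    proof -
      have "\<bar>inner (x j) (s n - l)\<bar> \<le> norm (x j) * norm (s n - l)"
        by (rule Cauchy_Schwarz_ineq2)
      also have "\<dots> \<le> K * norm (s n - l)"
        using K by (simp add: mult_right_mono)
      also have "\<dots> < e / 3"
        using n \<open>0 < K\<close> by (simp add: field_simps)
      finally show ?thesis
        by (simp add: inner_diff_right)
    qed
    obtain M where M: "\<forall>i\<ge>M. \<forall>j\<ge>M. dist (inner (x i) (s n)) (inner (x j) (s n)) < e / 3"
      using metric_CauchyD[OF convergent_Cauchy, of "\<lambda>j. inner (x j) (s n)" "e / 3"] s_mem \<open>0 < e\<close>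
      by auto
    have "dist (inner (x i) l) (inner (x j) l) < e" if "M \<le> i" "M \<le> j" for i j
      using M[rule_format, OF that] close[of i] close[of j] unfolding dist_real_def by linarith
    then show "\<exists>M. \<forall>i\<ge>M. \<forall>j\<ge>M. dist (inner (x i) l) (inner (x j) l) < e"
      by blast
  qed
  then show "l \<in> {w. convergent (\<lambda>j. inner (x j) w)}"
    by (simp add: Cauchy_convergent_iff)
qed

lemma weakly_converges_subseq:
  assumes "weakly_converges x p" and "strict_mono r"
  shows "weakly_converges (x \<circ> r) p"
  using assms LIMSEQ_subseq_LIMSEQ unfolding weakly_converges_def by (fastforce simp: o_def)

lemma Bseq_inner_limits_representable:
  fixes x :: "nat \<Rightarrow> 'a::{real_inner,complete_space}"
  assumes "Bseq x"
  obtains p where "convergent (\<lambda>j. inner (x j) p)"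
    and "\<And>w. convergent (\<lambda>j. inner (x j) w) \<Longrightarrow> (\<lambda>j. inner (x j) w) \<longlonglongrightarrow> inner p w"
proof -
  define W where "W = {w. convergent (\<lambda>j. inner (x j) w)}"
  define f where "f w = lim (\<lambda>j. inner (x j) w)" for w
  have f_lim: "(\<lambda>j. inner (x j) w) \<longlonglongrightarrow> f w" if "w \<in> W" for w
    using that by (simp add: W_def f_def convergent_LIMSEQ_iff)
  have "closed W" and "subspace W"
    unfolding W_def using assms by (simp_all add: closed_inner_convergent subspace_inner_convergent)
  have "f (z + w) = f z + f w" if "z \<in> W" "w \<in> W" for z w
  proof -
    have "(\<lambda>j. inner (x j) (z + w)) \<longlonglongrightarrow> f z + f w"
      unfolding inner_add_right using that by (intro tendsto_add f_lim)
    with f_lim[of "z + w"] that \<open>subspace W\<close> show ?thesis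
      by (simp add: subspace_add LIMSEQ_unique)
  qed
  moreover have "f (c *\<^sub>R z) = c * f z" if "z \<in> W" for c z
  proof -
    have "(\<lambda>j. inner (x j) (c *\<^sub>R z)) \<longlonglongrightarrow> c * f z"
      unfolding inner_scaleR_right using that by (intro tendsto_mult_left f_lim)
    with f_lim[of "c *\<^sub>R z"] that \<open>subspace W\<close> show ?thesis
      by (simp add: subspace_scale LIMSEQ_unique)
  qed
  moreover obtain K where K: "\<And>j. norm (x j) \<le> K"
    using assms BseqE by metis
  have "\<bar>f w\<bar> \<le> K * norm w" if "w \<in> W" for w
  proof (rule LIMSEQ_le_const2)
    show "(\<lambda>j. \<bar>inner (x j) w\<bar>) \<longlonglongrightarrow> \<bar>f w\<bar>"
      using that by (intro tendsto_rabs f_lim)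
    show "\<exists>N. \<forall>j\<ge>N. \<bar>inner (x j) w\<bar> \<le> K * norm w"
      using Cauchy_Schwarz_ineq2 K by (meson mult_right_mono norm_ge_zero order_trans)
  qed
  ultimately obtain p where "p \<in> W" and "\<And>w. w \<in> W \<Longrightarrow> f w = inner p w"
    using riesz_representation_subspace[OF \<open>closed W\<close> \<open>subspace W\<close>] by metis
  then show thesis
    using that f_lim unfolding W_def by auto
qed

lemma Bseq_has_weakly_convergent_subseq:
  fixes x :: "nat \<Rightarrow> 'a::{real_inner,complete_space}"
  assumes "Bseq x"
  shows "\<exists>r p. strict_mono r \<and> weakly_converges (x \<circ> r) p"
proof -
  obtain r where "strict_mono r" and conv: "\<And>m. convergent (\<lambda>j. inner (x (r j)) (x m))"
    using Bseq_inner_diagonal_subseq[OF assms] by blast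
  define W where "W = {w. convergent (\<lambda>j. inner (x (r j)) w)}"
  have "Bseq (\<lambda>j. x (r j))"
    using Bseq_subseq[OF assms] .
  then obtain p where "convergent (\<lambda>j. inner (x (r j)) p)"
    and p_lim: "\<And>w. convergent (\<lambda>j. inner (x (r j)) w) \<Longrightarrow> (\<lambda>j. inner (x (r j)) w) \<longlonglongrightarrow> inner p w"
    by (rule Bseq_inner_limits_representable) (rule that)
  then have "p \<in> W"
    by (simp add: W_def)
  have "closed W" and "subspace W"
    unfolding W_def using \<open>Bseq (\<lambda>j. x (r j))\<close>
    by (simp_all add: closed_inner_convergent subspace_inner_convergent)
  have "(\<lambda>j. inner (x (r j)) y) \<longlonglongrightarrow> inner p y" for y
  proof -
    obtain q where "q \<in> W" and q: "\<And>w. w \<in> W \<Longrightarrow> inner (y - q) w = 0"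
      using orthogonal_projection_exists[OF \<open>closed W\<close> \<open>subspace W\<close>] by blast
    have "inner (x (r j)) y = inner (x (r j)) q" for j
      using q[of "x (r j)"] conv by (simp add: W_def inner_diff_left inner_commute)
    moreover have "inner p y = inner p q"
      using q[OF \<open>p \<in> W\<close>] by (simp add: inner_diff_left inner_diff_right inner_commute)
    ultimately show ?thesis
      using p_lim[of q] \<open>q \<in> W\<close> by (simp add: W_def)
  qed
  with \<open>strict_mono r\<close> show ?thesis
    unfolding weakly_converges_def by (auto simp: o_def)
qed

section \<open>Opial's lemma\<close>

lemma weakly_converges_if_subseq_limits_eq:
  fixes x :: "nat \<Rightarrow> 'a::{real_inner,complete_space}"
  assumes "Bseq x" and limits_eq: "\<And>r q. strict_mono r \<Longrightarrow> weakly_converges (x \<circ> r) q \<Longrightarrow> q = p"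
  shows "weakly_converges x p"
  unfolding weakly_converges_def
proof (rule allI, rule ccontr)
  fix v
  assume "\<not> (\<lambda>k. inner (x k) v) \<longlonglongrightarrow> inner p v"
  then obtain e where "0 < e"
    and not_close: "\<not> eventually (\<lambda>k. dist (inner (x k) v) (inner p v) < e) sequentially"
    unfolding tendsto_iff by blast
  from not_eventually_sequentiallyD[OF not_close] obtain r :: "nat \<Rightarrow> nat"
    where "strict_mono r" and far: "\<And>j. e \<le> dist (inner (x (r j)) v) (inner p v)"
    by (meson not_less)
  obtain s q where "strict_mono s" and "weakly_converges (x \<circ> r \<circ> s) q"
    using Bseq_has_weakly_convergent_subseq[of "x \<circ> r"] Bseq_subseq[OF \<open>Bseq x\<close>] by (auto simp: o_def)
  moreover have "strict_mono (r \<circ> s)"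
    using \<open>strict_mono r\<close> \<open>strict_mono s\<close> by (rule strict_mono_o)
  ultimately have "weakly_converges (x \<circ> (r \<circ> s)) p"
    using limits_eq by (metis o_assoc)
  then have "eventually (\<lambda>j. dist (inner (x (r (s j))) v) (inner p v) < e) sequentially"
    using \<open>0 < e\<close> unfolding weakly_converges_def tendsto_iff by auto
  then show False
    using far by (auto simp: eventually_sequentially not_less[symmetric])
qed

lemma weak_subseq_limits_eq_if_dist_convergent:
  fixes x :: "nat \<Rightarrow> 'a::real_inner"
  assumes "convergent (\<lambda>n. norm (x n - p))" and "convergent (\<lambda>n. norm (x n - q))"
    and "strict_mono r" and "weakly_converges (x \<circ> r) p"
    and "strict_mono s" and "weakly_converges (x \<circ> s) q"
  shows "p = q"
proof -
  have polarization: "2 * inner (x n) (p - q)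
      = (norm (x n - q))\<^sup>2 - (norm (x n - p))\<^sup>2 + (norm p)\<^sup>2 - (norm q)\<^sup>2" for n
    unfolding power2_norm_eq_inner by (simp add: inner_diff_left inner_diff_right inner_commute)
  obtain dp dq where "(\<lambda>n. norm (x n - p)) \<longlonglongrightarrow> dp" and "(\<lambda>n. norm (x n - q)) \<longlonglongrightarrow> dq"
    using assms(1,2) by (auto simp: convergent_def)
  then have lim: "(\<lambda>n. 2 * inner (x n) (p - q)) \<longlonglongrightarrow> dq\<^sup>2 - dp\<^sup>2 + (norm p)\<^sup>2 - (norm q)\<^sup>2"
    unfolding polarization by (intro tendsto_intros)
  have "(\<lambda>j. 2 * inner (x (r j)) (p - q)) \<longlonglongrightarrow> 2 * inner p (p - q)"
    using assms(4) unfolding weakly_converges_def by (intro tendsto_mult_left) (simp add: o_def)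
  with LIMSEQ_subseq_LIMSEQ[OF lim \<open>strict_mono r\<close>, unfolded o_def]
  have "2 * inner p (p - q) = dq\<^sup>2 - dp\<^sup>2 + (norm p)\<^sup>2 - (norm q)\<^sup>2"
    using LIMSEQ_unique by blast
  moreover have "(\<lambda>j. 2 * inner (x (s j)) (p - q)) \<longlonglongrightarrow> 2 * inner q (p - q)"
    using assms(6) unfolding weakly_converges_def by (intro tendsto_mult_left) (simp add: o_def)
  with LIMSEQ_subseq_LIMSEQ[OF lim \<open>strict_mono s\<close>, unfolded o_def]
  have "2 * inner q (p - q) = dq\<^sup>2 - dp\<^sup>2 + (norm p)\<^sup>2 - (norm q)\<^sup>2"
    using LIMSEQ_unique by blast
  ultimately have "inner (p - q) (p - q) = 0"
    by (simp add: inner_diff_left)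
  then show ?thesis
    by simp
qed

lemma Bseq_if_dist_convergent:
  fixes x :: "nat \<Rightarrow> 'a::real_normed_vector"
  assumes "convergent (\<lambda>n. norm (x n - z))"
  shows "Bseq x"
proof -
  obtain K where K: "\<And>n. norm (norm (x n - z)) \<le> K"
    using convergent_imp_Bseq[OF assms] BseqE by metis
  show ?thesis
  proof (rule BseqI')
    fix n
    show "norm (x n) \<le> K + norm z"
      using K[of n] norm_triangle_sub[of "x n" z] by simp
  qed
qed

lemma opial:
  fixes x :: "nat \<Rightarrow> 'a::{real_inner,complete_space}"
  assumes "S \<noteq> {}"
    and dist_convergent: "\<And>z. z \<in> S \<Longrightarrow> convergent (\<lambda>n. norm (x n - z))"
    and cluster_points: "\<And>r q. strict_mono r \<Longrightarrow> weakly_converges (x \<circ> r) q \<Longrightarrow> q \<in> S"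
  shows "\<exists>p\<in>S. weakly_converges x p"
proof -
  obtain z where "z \<in> S"
    using \<open>S \<noteq> {}\<close> by blast
  then have "Bseq x"
    by (rule Bseq_if_dist_convergent[OF dist_convergent])
  then obtain r p where "strict_mono r" and "weakly_converges (x \<circ> r) p"
    using Bseq_has_weakly_convergent_subseq by blast
  then have "p \<in> S"
    by (rule cluster_points)
  have "weakly_converges x p"
    using \<open>Bseq x\<close>
  proof (rule weakly_converges_if_subseq_limits_eq)
    fix s q
    assume "strict_mono s" and "weakly_converges (x \<circ> s) q"
    then show "q = p"
      using weak_subseq_limits_eq_if_dist_convergent[OF dist_convergent dist_convergent]
        \<open>strict_mono r\<close> \<open>weakly_converges (x \<circ> r) p\<close> \<open>p \<in> S\<close> cluster_points by blast
  qed
  with \<open>p \<in> S\<close> show ?thesis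
    by blast
qed

section \<open>Zeros of a maximally monotone plus a Lipschitz monotone operator\<close>

lemma mem_resolvent_iff:
  assumes "0 < lam"
  shows "p \<in> resolvent lam A u \<longleftrightarrow> inverse lam *\<^sub>R (u - p) \<in> A p"
  using assms by (auto simp: resolvent_def intro!: bexI[of _ "inverse lam *\<^sub>R (u - p)"])

lemma maximally_monotone_memI:
  assumes "maximally_monotone A" and "\<And>y v. v \<in> A y \<Longrightarrow> 0 \<le> inner (p - y) (u - v)"
  shows "u \<in> A p"
proof -
  define A' where "A' = A(p := insert u (A p))"
  have swap: "inner (y - p) (v - u) = inner (p - y) (u - v)" for y v
    by (metis inner_minus_left inner_minus_right minus_diff_eq)
  have "monotone_op A'"
    using assms swap unfolding A'_def monotone_op_def maximally_monotone_def
    by (auto split: if_splits)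
  moreover have "\<forall>z. A z \<subseteq> A' z"
    by (auto simp: A'_def)
  ultimately have "A' = A"
    using assms(1) unfolding maximally_monotone_def by blast
  then show ?thesis
    by (metis A'_def fun_upd_same insertI1)
qed

lemma eq_if_variational_inequality:
  fixes B :: "'a::real_inner \<Rightarrow> 'a"
  assumes "isCont B p" and var_ineq: "\<And>y. 0 \<le> inner (p - y) (b - B y)"
  shows "b = B p"
proof -
  define w where "w = B p - b"
  define t :: "nat \<Rightarrow> real" where "t n = inverse (Suc n)" for n
  have "0 \<le> inner w (b - B (p - t n *\<^sub>R w))" for n
  proof -
    have "0 \<le> inner (p - (p - t n *\<^sub>R w)) (b - B (p - t n *\<^sub>R w))"
      by (rule var_ineq)
    then show ?thesis
      by (simp add: t_def zero_le_mult_iff)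
  qed
  moreover have "(\<lambda>n. inner w (b - B (p - t n *\<^sub>R w))) \<longlonglongrightarrow> inner w (b - B (p - 0 *\<^sub>R w))"
    unfolding t_def
    by (intro tendsto_intros isCont_tendsto_compose[where g = B] LIMSEQ_inverse_real_of_nat) (simp add: assms)
  ultimately have "0 \<le> inner w (b - B p)"
    by (simp add: LIMSEQ_le_const)
  also have "\<dots> = - inner w w"
    by (simp add: w_def inner_diff_right inner_minus_right[symmetric])
  finally have "inner w w = 0"
    using inner_ge_zero[of w] by linarith
  then show ?thesis
    by (simp add: w_def)
qed

lemma neg_weak_limit_mem_maximally_monotone:
  fixes A :: "'a::real_inner \<Rightarrow> 'a set"
  assumes "maximally_monotone A" and "monotone_fun B"
    and "Bseq \<xi>" and "weakly_converges \<xi> p" and "weakly_converges (\<lambda>j. B (\<xi> j)) b"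
    and \<alpha>_mem: "\<And>j. \<alpha> j \<in> A (\<xi> j)" and "(\<lambda>j. \<alpha> j + B (\<xi> j)) \<longlonglongrightarrow> 0"
  shows "- b \<in> A p"
proof (rule maximally_monotone_memI[OF \<open>maximally_monotone A\<close>])
  fix y v
  assume "v \<in> A y"
  have \<xi>_lim: "(\<lambda>j. inner (\<xi> j) w) \<longlonglongrightarrow> inner p w" for w
    using assms(4) by (simp add: weakly_converges_def)
  have B\<xi>_lim: "(\<lambda>j. inner (B (\<xi> j)) w) \<longlonglongrightarrow> inner b w" for w
    using assms(5) by (simp add: weakly_converges_def)
  have \<upsilon>_lim: "(\<lambda>j. inner (\<xi> j - y) (\<alpha> j + B (\<xi> j))) \<longlonglongrightarrow> 0"
    using assms(3,7) Bseq_add[of \<xi> "- y"] by (intro tendsto_inner_Bseq_zero) simp_all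
  (* The monotonicity inequality of B at p is added so that the products of the two
     merely weakly convergent sequences \<xi> and B \<circ> \<xi> cancel. *)
  define R where "R j = inner (\<xi> j - y) (\<alpha> j + B (\<xi> j)) - inner (\<xi> j) v + inner y v
      + inner (B (\<xi> j)) (y - p) - inner (\<xi> j) (B p) + inner p (B p)" for j
  have "R j = inner (\<xi> j - y) (\<alpha> j - v) + inner (\<xi> j - p) (B (\<xi> j) - B p)" for j
    unfolding R_def by (simp add: inner_diff_left inner_diff_right inner_add_right inner_commute)
  then have "0 \<le> R j" for j
    using assms(1,2) \<alpha>_mem \<open>v \<in> A y\<close>
    unfolding maximally_monotone_def monotone_op_def monotone_fun_def by (metis add_nonneg_nonneg)
  moreover have "R \<longlonglongrightarrow> 0 - inner p v + inner y v + inner b (y - p) - inner p (B p) + inner p (B p)"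
    unfolding R_def by (intro tendsto_intros \<upsilon>_lim \<xi>_lim B\<xi>_lim)
  ultimately have "0 \<le> 0 - inner p v + inner y v + inner b (y - p) - inner p (B p) + inner p (B p)"
    by (simp add: LIMSEQ_le_const)
  then show "0 \<le> inner (p - y) (- b - v)"
    by (simp add: inner_diff_left inner_diff_right inner_commute)
qed

lemma weak_limit_eq_of_monotone:
  fixes A :: "'a::real_inner \<Rightarrow> 'a set"
  assumes "monotone_op A" and "monotone_fun B" and "isCont B p" and "- b \<in> A p"
    and "Bseq \<xi>" and "weakly_converges \<xi> p" and "weakly_converges (\<lambda>j. B (\<xi> j)) b"
    and \<alpha>_mem: "\<And>j. \<alpha> j \<in> A (\<xi> j)" and "(\<lambda>j. \<alpha> j + B (\<xi> j)) \<longlonglongrightarrow> 0"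
  shows "b = B p"
proof (rule eq_if_variational_inequality[OF \<open>isCont B p\<close>])
  fix y
  have \<xi>_lim: "(\<lambda>j. inner (\<xi> j) w) \<longlonglongrightarrow> inner p w" for w
    using assms(6) by (simp add: weakly_converges_def)
  have B\<xi>_lim: "(\<lambda>j. inner (B (\<xi> j)) w) \<longlonglongrightarrow> inner b w" for w
    using assms(7) by (simp add: weakly_converges_def)
  have \<upsilon>_lim: "(\<lambda>j. inner (\<xi> j - p) (\<alpha> j + B (\<xi> j))) \<longlonglongrightarrow> 0"
    using assms(5,9) Bseq_add[of \<xi> "- p"] by (intro tendsto_inner_Bseq_zero) simp_all
  define R where "R j = inner (\<xi> j - p) (\<alpha> j + B (\<xi> j)) + inner (\<xi> j) b - inner p b
      + inner (B (\<xi> j)) (p - y) - inner (\<xi> j) (B y) + inner y (B y)" for j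
  have "R j = inner (\<xi> j - p) (\<alpha> j - - b) + inner (\<xi> j - y) (B (\<xi> j) - B y)" for j
    unfolding R_def by (simp add: inner_diff_left inner_diff_right inner_add_right inner_commute)
  then have "0 \<le> R j" for j
    using assms(1,2,4) \<alpha>_mem unfolding monotone_op_def monotone_fun_def by (metis add_nonneg_nonneg)
  moreover have "R \<longlonglongrightarrow> 0 + inner p b - inner p b + inner b (p - y) - inner p (B y) + inner y (B y)"
    unfolding R_def by (intro tendsto_intros \<upsilon>_lim \<xi>_lim B\<xi>_lim)
  ultimately have "0 \<le> 0 + inner p b - inner p b + inner b (p - y) - inner p (B y) + inner y (B y)"
    by (simp add: LIMSEQ_le_const)
  then show "0 \<le> inner (p - y) (b - B y)"
    by (simp add: inner_diff_left inner_diff_right inner_commute)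
qed

lemma Bseq_lipschitz_image:
  fixes B :: "'a::real_normed_vector \<Rightarrow> 'b::real_normed_vector"
  assumes "L-lipschitz_on UNIV B" and "Bseq \<xi>"
  shows "Bseq (\<lambda>j. B (\<xi> j))"
proof -
  obtain K where K: "\<And>j. norm (\<xi> j) \<le> K"
    using \<open>Bseq \<xi>\<close> BseqE by metis
  show ?thesis
  proof (rule BseqI')
    fix j
    have "norm (B (\<xi> j) - B 0) \<le> L * norm (\<xi> j)"
      using lipschitz_onD[OF assms(1), of "\<xi> j" 0] by (simp add: dist_norm)
    also have "\<dots> \<le> L * K"
      using K lipschitz_on_nonneg[OF assms(1)] by (simp add: mult_left_mono)
    finally show "norm (B (\<xi> j)) \<le> norm (B 0) + L * K"
      using norm_triangle_sub[of "B (\<xi> j)" "B 0"] by simp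
  qed
qed

lemma zeros_sum_of_weak_cluster_point:
  fixes A :: "'a::{real_inner,complete_space} \<Rightarrow> 'a set"
  assumes "maximally_monotone A" and "monotone_fun B" and "L-lipschitz_on UNIV B"
    and "Bseq \<xi>" and "weakly_converges \<xi> p"
    and "\<And>j. \<alpha> j \<in> A (\<xi> j)" and "(\<lambda>j. \<alpha> j + B (\<xi> j)) \<longlonglongrightarrow> 0"
  shows "p \<in> zeros_sum A B"
proof -
  obtain s b where "strict_mono s" and "weakly_converges ((\<lambda>j. B (\<xi> j)) \<circ> s) b"
    using Bseq_has_weakly_convergent_subseq Bseq_lipschitz_image[OF assms(3,4)] by blast
  moreover have "isCont B p"
    using lipschitz_on_continuous_on[OF assms(3)] by (simp add: continuous_on_eq_continuous_at)
  moreover note Bseq_subseq[OF assms(4)] weakly_converges_subseq[OF assms(5) \<open>strict_mono s\<close>]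
    LIMSEQ_subseq_LIMSEQ[OF assms(7) \<open>strict_mono s\<close>]
  ultimately have "- b \<in> A p" and "b = B p"
    using neg_weak_limit_mem_maximally_monotone[OF assms(1,2), of "\<xi> \<circ> s" p b "\<alpha> \<circ> s"]
      weak_limit_eq_of_monotone[OF _ assms(2), of A p b "\<xi> \<circ> s" "\<alpha> \<circ> s"] assms(1,6)
    by (simp_all add: o_def maximally_monotone_def)
  then show ?thesis
    unfolding zeros_sum_def by force
qed

section \<open>The forward-reflected-backward iteration\<close>

lemma inner_lipschitz_young:
  fixes s v u bv bu :: "'a::real_inner"
  assumes "norm (bv - bu) \<le> L * norm (v - u)" and "0 \<le> L"
  shows "2 * \<bar>inner s (bv - bu)\<bar> \<le> L * ((norm s)\<^sup>2 + (norm (v - u))\<^sup>2)"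
proof -
  have "\<bar>inner s (bv - bu)\<bar> \<le> norm s * (L * norm (v - u))"
    using Cauchy_Schwarz_ineq2[of s "bv - bu"] assms(1) by (meson mult_left_mono norm_ge_zero order_trans)
  moreover have "L * (2 * (norm s * norm (v - u))) \<le> L * ((norm s)\<^sup>2 + (norm (v - u))\<^sup>2)"
    using sum_squares_bound[of "norm s" "norm (v - u)"] \<open>0 \<le> L\<close> by (simp add: mult_left_mono)
  ultimately show ?thesis
    by (simp add: algebra_simps)
qed

lemma frb_energy_step:
  fixes u v w z a bu bv bw bz :: "'a::real_inner"
  assumes "0 < lam" and step: "v - (2 * lam) *\<^sub>R bv + lam *\<^sub>R bu = w + lam *\<^sub>R a"
    and mono_A: "0 \<le> inner (w - z) (a + bz)" and mono_B: "0 \<le> inner (w - z) (bw - bz)"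
    and lipschitz: "norm (bv - bu) \<le> L * norm (v - u)" and "0 \<le> L"
  shows "(norm (w - z))\<^sup>2 - 2 * lam * inner (w - z) (bw - bv) + lam * L * (norm (w - v))\<^sup>2
           + (1 - 2 * lam * L) * (norm (w - v))\<^sup>2
         \<le> (norm (v - z))\<^sup>2 - 2 * lam * inner (v - z) (bv - bu) + lam * L * (norm (v - u))\<^sup>2"
proof -
  have lam_a: "lam *\<^sub>R a = v - w - (2 * lam) *\<^sub>R bv + lam *\<^sub>R bu"
    using step by (simp add: algebra_simps)
  have "0 \<le> lam * inner (w - z) (a + bz)"
    using mono_A \<open>0 < lam\<close> by simp
  also have "\<dots> = inner (w - z) (lam *\<^sub>R a + lam *\<^sub>R bz)"
    by (simp add: algebra_simps)
  finally have "0 \<le> inner (w - z) (v - w - (2 * lam) *\<^sub>R bv + lam *\<^sub>R bu + lam *\<^sub>R bz)"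
    unfolding lam_a .
  moreover have "0 \<le> lam * inner (w - z) (bw - bz)"
    using mono_B \<open>0 < lam\<close> by simp
  moreover have "2 * inner (w - z) (v - w - (2 * lam) *\<^sub>R bv + lam *\<^sub>R bu + lam *\<^sub>R bz)
      + 2 * (lam * inner (w - z) (bw - bz))
    = (norm (v - z))\<^sup>2 - (norm (w - z))\<^sup>2 - (norm (w - v))\<^sup>2 + 2 * lam * inner (w - z) (bw - bv)
      - 2 * lam * inner (v - z) (bv - bu) - 2 * lam * inner (w - v) (bv - bu)"
    unfolding power2_norm_eq_inner
    by (simp add: inner_commute algebra_simps)
  moreover have "- (2 * inner (w - v) (bv - bu)) \<le> L * ((norm (w - v))\<^sup>2 + (norm (v - u))\<^sup>2)"
    using inner_lipschitz_young[OF lipschitz \<open>0 \<le> L\<close>, of "w - v"]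
      abs_ge_minus_self[of "inner (w - v) (bv - bu)"] by linarith
  then have "lam * - (2 * inner (w - v) (bv - bu)) \<le> lam * (L * ((norm (w - v))\<^sup>2 + (norm (v - u))\<^sup>2))"
    using \<open>0 < lam\<close> by (intro mult_left_mono) auto
  ultimately show ?thesis
    by (simp add: algebra_simps)
qed

(* x k stands for x_{k-1} of the informal statement, so that the recursion needs no separate
   first step. *)
locale frb_iteration =
  fixes A :: "'a::{real_inner,complete_space} \<Rightarrow> 'a set" and B :: "'a \<Rightarrow> 'a"
    and L lam :: real and x :: "nat \<Rightarrow> 'a"
  assumes A_maximal: "maximally_monotone A"
    and B_monotone: "monotone_fun B"
    and B_lipschitz: "L-lipschitz_on UNIV B"
    and lam_pos: "0 < lam"
    and step_size: "2 * L * lam < 1"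
    and iteration: "\<And>k. x (Suc (Suc k)) \<in>
          resolvent lam A (x (Suc k) - (2 * lam) *\<^sub>R B (x (Suc k)) + lam *\<^sub>R B (x k))"
begin

definition a :: "nat \<Rightarrow> 'a" where
  "a k = inverse lam *\<^sub>R (x (Suc k) - (2 * lam) *\<^sub>R B (x (Suc k)) + lam *\<^sub>R B (x k) - x (Suc (Suc k)))"

definition energy :: "'a \<Rightarrow> nat \<Rightarrow> real" where
  "energy z k = (norm (x (Suc k) - z))\<^sup>2 - 2 * lam * inner (x (Suc k) - z) (B (x (Suc k)) - B (x k))
     + lam * L * (norm (x (Suc k) - x k))\<^sup>2"

lemma L_nonneg: "0 \<le> L"
  using B_lipschitz by (rule lipschitz_on_nonneg)

lemma step_factor_pos: "0 < 1 - 2 * lam * L"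
  using step_size by (simp add: mult_ac)

lemma energy_factor_pos: "0 < 1 - lam * L"
  using step_factor_pos mult_nonneg_nonneg[OF less_imp_le[OF lam_pos] L_nonneg] by linarith

lemma B_lipschitz_norm: "norm (B u - B v) \<le> L * norm (u - v)"
  using lipschitz_onD[OF B_lipschitz] by (simp add: dist_norm)

lemma a_mem: "a k \<in> A (x (Suc (Suc k)))"
  unfolding a_def using iteration[of k] mem_resolvent_iff[OF lam_pos] by blast

lemma step_eq:
  "x (Suc k) - (2 * lam) *\<^sub>R B (x (Suc k)) + lam *\<^sub>R B (x k) = x (Suc (Suc k)) + lam *\<^sub>R a k"
  using lam_pos by (simp add: a_def)

lemma energy_step:
  assumes "z \<in> zeros_sum A B"
  shows "energy z (Suc k) + (1 - 2 * lam * L) * (norm (x (Suc (Suc k)) - x (Suc k)))\<^sup>2 \<le> energy z k"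
proof -
  obtain c where "c \<in> A z" and "c + B z = 0"
    using assms by (auto simp: zeros_sum_def)
  then have "0 \<le> inner (x (Suc (Suc k)) - z) (a k - c)"
    using A_maximal a_mem[of k] unfolding maximally_monotone_def monotone_op_def by blast
  moreover have "a k - c = a k + B z"
    using minus_unique[OF \<open>c + B z = 0\<close>] by simp
  ultimately have "0 \<le> inner (x (Suc (Suc k)) - z) (a k + B z)"
    by simp
  moreover have "0 \<le> inner (x (Suc (Suc k)) - z) (B (x (Suc (Suc k))) - B z)"
    using B_monotone by (simp add: monotone_fun_def)
  ultimately show ?thesis
    using frb_energy_step[OF lam_pos step_eq _ _ B_lipschitz_norm L_nonneg] by (simp add: energy_def)
qed

lemma energy_lower:
  "(1 - lam * L) * (norm (x (Suc k) - z))\<^sup>2 \<le> energy z k"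
proof -
  have "2 * \<bar>inner (x (Suc k) - z) (B (x (Suc k)) - B (x k))\<bar>
      \<le> L * ((norm (x (Suc k) - z))\<^sup>2 + (norm (x (Suc k) - x k))\<^sup>2)"
    by (rule inner_lipschitz_young[OF B_lipschitz_norm L_nonneg])
  then have "lam * (2 * inner (x (Suc k) - z) (B (x (Suc k)) - B (x k)))
      \<le> lam * (L * ((norm (x (Suc k) - z))\<^sup>2 + (norm (x (Suc k) - x k))\<^sup>2))"
    using lam_pos by (intro mult_left_mono) auto
  then show ?thesis
    by (simp add: energy_def algebra_simps)
qed

lemma energy_nonneg: "0 \<le> energy z k"
  using mult_nonneg_nonneg[OF less_imp_le[OF energy_factor_pos] zero_le_power2] energy_lower
  by (rule order_trans)

lemma energy_decseq:
  assumes "z \<in> zeros_sum A B"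
  shows "decseq (energy z)"
proof (rule decseq_SucI)
  fix k
  have "0 \<le> (1 - 2 * lam * L) * (norm (x (Suc (Suc k)) - x (Suc k)))\<^sup>2"
    using step_factor_pos by simp
  then show "energy z (Suc k) \<le> energy z k"
    using energy_step[OF assms, of k] by linarith
qed

lemma energy_convergent:
  assumes "z \<in> zeros_sum A B"
  shows "convergent (energy z)"
  using decseq_convergent[OF energy_decseq[OF assms], of 0] energy_nonneg
  by (metis convergent_def)

lemma increments_tendsto_zero:
  assumes "zeros_sum A B \<noteq> {}"
  shows "(\<lambda>k. x (Suc k) - x k) \<longlonglongrightarrow> 0"
proof -
  obtain z where z: "z \<in> zeros_sum A B"
    using assms by blast
  obtain l where l: "energy z \<longlonglongrightarrow> l"
    using energy_convergent[OF z] by (auto simp: convergent_def)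
  have "(\<lambda>k. (norm (x (Suc (Suc k)) - x (Suc k)))\<^sup>2) \<longlonglongrightarrow> 0"
  proof (rule Lim_null_comparison)
    have "(1 - 2 * lam * L) * (norm (x (Suc (Suc k)) - x (Suc k)))\<^sup>2 \<le> energy z k - energy z (Suc k)" for k
      using energy_step[OF z, of k] by linarith
    then show "\<forall>\<^sub>F k in sequentially.
        norm ((norm (x (Suc (Suc k)) - x (Suc k)))\<^sup>2) \<le> (energy z k - energy z (Suc k)) / (1 - 2 * lam * L)"
      using step_factor_pos by (simp add: pos_le_divide_eq mult.commute)
    have "(\<lambda>k. (energy z k - energy z (Suc k)) / (1 - 2 * lam * L)) \<longlonglongrightarrow> (l - l) / (1 - 2 * lam * L)"
      by (intro tendsto_intros l LIMSEQ_Suc[OF l]) (use step_factor_pos in simp)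
    then show "(\<lambda>k. (energy z k - energy z (Suc k)) / (1 - 2 * lam * L)) \<longlonglongrightarrow> 0"
      by simp
  qed
  then have "(\<lambda>k. sqrt ((norm (x (Suc (Suc k)) - x (Suc k)))\<^sup>2)) \<longlonglongrightarrow> sqrt 0"
    by (rule tendsto_real_sqrt)
  then have "(\<lambda>k. x (Suc (Suc k)) - x (Suc k)) \<longlonglongrightarrow> 0"
    by (simp add: tendsto_norm_zero_iff)
  then show ?thesis
    using LIMSEQ_imp_Suc[where f = "\<lambda>k. x (Suc k) - x k"] by simp
qed

lemma B_increments_tendsto_zero:
  assumes "zeros_sum A B \<noteq> {}"
  shows "(\<lambda>k. B (x (Suc k)) - B (x k)) \<longlonglongrightarrow> 0"
proof (rule Lim_null_comparison)
  show "\<forall>\<^sub>F k in sequentially. norm (B (x (Suc k)) - B (x k)) \<le> L * norm (x (Suc k) - x k)"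
    by (simp add: B_lipschitz_norm)
  have "(\<lambda>k. norm (x (Suc k) - x k)) \<longlonglongrightarrow> 0"
    using increments_tendsto_zero[OF assms] by (simp add: tendsto_norm_zero_iff)
  then show "(\<lambda>k. L * norm (x (Suc k) - x k)) \<longlonglongrightarrow> 0"
    by (rule tendsto_mult_right_zero)
qed

lemma dist_to_zero_convergent:
  assumes z: "z \<in> zeros_sum A B"
  shows "convergent (\<lambda>k. norm (x k - z))"
proof -
  have "(norm (x (Suc k) - z))\<^sup>2 \<le> energy z 0 / (1 - lam * L)" for k
  proof -
    have "energy z k \<le> energy z 0"
      using energy_decseq[OF z] by (simp add: decseq_def)
    then show ?thesis
      using energy_lower[of k z] energy_factor_pos by (simp add: pos_le_divide_eq mult.commute)
  qed
  then have "Bseq (\<lambda>k. x (Suc k) - z)"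
    by (intro BseqI'[where K = "sqrt (energy z 0 / (1 - lam * L))"] real_le_rsqrt)
  moreover obtain l where "energy z \<longlonglongrightarrow> l"
    using energy_convergent[OF z] by (auto simp: convergent_def)
  moreover have "zeros_sum A B \<noteq> {}"
    using z by blast
  then have "(\<lambda>k. norm (x (Suc k) - x k)) \<longlonglongrightarrow> 0"
    using increments_tendsto_zero by (simp add: tendsto_norm_zero_iff)
  ultimately have "(\<lambda>k. energy z k + 2 * lam * inner (x (Suc k) - z) (B (x (Suc k)) - B (x k))
      - lam * L * (norm (x (Suc k) - x k))\<^sup>2) \<longlonglongrightarrow> l + 2 * lam * 0 - lam * L * 0\<^sup>2"
    using B_increments_tendsto_zero[OF \<open>zeros_sum A B \<noteq> {}\<close>]
    by (intro tendsto_intros tendsto_inner_Bseq_zero)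
  then have "(\<lambda>k. sqrt ((norm (x (Suc k) - z))\<^sup>2)) \<longlonglongrightarrow> sqrt l"
    by (intro tendsto_real_sqrt) (simp add: energy_def)
  then have "convergent (\<lambda>k. norm (x (Suc k) - z))"
    by (auto simp: convergent_def)
  then show ?thesis
    using convergent_ignore_initial_segment[of "\<lambda>k. norm (x k - z)" 1] by simp
qed

lemma residual_tendsto_zero:
  assumes "zeros_sum A B \<noteq> {}"
  shows "(\<lambda>k. a k + B (x (Suc (Suc k)))) \<longlonglongrightarrow> 0"
proof -
  have "(\<lambda>k. a k + B (x (Suc (Suc k))))
      = (\<lambda>k. - inverse lam *\<^sub>R (x (Suc (Suc k)) - x (Suc k))
        + (B (x (Suc (Suc k))) - B (x (Suc k))) - (B (x (Suc k)) - B (x k)))"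
    using lam_pos by (intro ext) (simp add: a_def algebra_simps scaleR_2[symmetric])
  moreover have "(\<lambda>k. - inverse lam *\<^sub>R (x (Suc (Suc k)) - x (Suc k))
        + (B (x (Suc (Suc k))) - B (x (Suc k))) - (B (x (Suc k)) - B (x k))) \<longlonglongrightarrow> 0"
    by (rule tendsto_eq_rhs[OF tendsto_diff[OF tendsto_add[OF
          tendsto_scaleR[OF tendsto_const LIMSEQ_Suc[OF increments_tendsto_zero[OF assms]]]
          LIMSEQ_Suc[OF B_increments_tendsto_zero[OF assms]]]
          B_increments_tendsto_zero[OF assms]]]) simp
  ultimately show ?thesis
    by simp
qed

lemma weak_cluster_point_in_zeros:
  assumes "zeros_sum A B \<noteq> {}" and "strict_mono r" and "weakly_converges (x \<circ> r) q"
  shows "q \<in> zeros_sum A B"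
proof -
  define s where "s j = r (j + 2) - 2" for j
  have r_ge: "j \<le> r j" for j
    using seq_suble[OF \<open>strict_mono r\<close>] .
  have s_idx: "Suc (Suc (s j)) = r (j + 2)" for j
    using r_ge[of "j + 2"] unfolding s_def by linarith
  have "strict_mono s"
    using \<open>strict_mono r\<close> r_ge unfolding strict_mono_def s_def
    by (auto intro!: diff_less_mono le_trans[OF _ r_ge])
  obtain z where "z \<in> zeros_sum A B"
    using assms(1) by blast
  then have "Bseq x"
    by (rule Bseq_if_dist_convergent[OF dist_to_zero_convergent])
  show ?thesis
  proof (rule zeros_sum_of_weak_cluster_point[OF A_maximal B_monotone B_lipschitz,
        where \<xi> = "\<lambda>j. x (r (j + 2))" and \<alpha> = "\<lambda>j. a (s j)"])
    show "Bseq (\<lambda>j. x (r (j + 2)))"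
      using Bseq_subseq[OF \<open>Bseq x\<close>] .
    have "strict_mono (\<lambda>j::nat. j + 2)"
      by (simp add: strict_mono_def)
    then show "weakly_converges (\<lambda>j. x (r (j + 2))) q"
      using weakly_converges_subseq[OF assms(3)] by (auto simp: o_def)
    show "a (s j) \<in> A (x (r (j + 2)))" for j
      using a_mem[of "s j"] by (simp only: s_idx)
    show "(\<lambda>j. a (s j) + B (x (r (j + 2)))) \<longlonglongrightarrow> 0"
      using LIMSEQ_subseq_LIMSEQ[OF residual_tendsto_zero[OF assms(1)] \<open>strict_mono s\<close>]
      by (simp add: o_def s_idx)
  qed
qed

theorem weakly_convergent_to_zero:
  assumes "zeros_sum A B \<noteq> {}"
  shows "\<exists>p\<in>zeros_sum A B. weakly_converges x p"
  using opial[OF assms dist_to_zero_convergent weak_cluster_point_in_zeros[OF assms]] .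

end

theorem corollary2p6:
  fixes A :: "'a::{real_inner, complete_space} \<Rightarrow> 'a set"
    and B :: "'a \<Rightarrow> 'a"
    and L lam :: real
    and x :: "nat \<Rightarrow> 'a"
    and xm1 :: 'a
  assumes "maximally_monotone A"
    and "monotone_fun B"
    and "L-lipschitz_on UNIV B"
    and "zeros_sum A B \<noteq> {}"
    and "0 < lam" and "2 * L * lam < 1"
    and "x 1 \<in> resolvent lam A (x 0 - (2 * lam) *\<^sub>R B (x 0) + lam *\<^sub>R B xm1)"
    and "\<forall>k. x (Suc (Suc k)) \<in>
           resolvent lam A (x (Suc k) - (2 * lam) *\<^sub>R B (x (Suc k)) + lam *\<^sub>R B (x k))"
  shows "\<exists>p \<in> zeros_sum A B. weakly_converges x p"
proof -
  define y where "y k = (if k = 0 then xm1 else x (k - 1))" for k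
  interpret frb_iteration A B L lam y
  proof
    show "y (Suc (Suc k)) \<in> resolvent lam A (y (Suc k) - (2 * lam) *\<^sub>R B (y (Suc k)) + lam *\<^sub>R B (y k))"
      for k
      using assms(7,8) by (cases k) (simp_all add: y_def)
  qed (use assms in auto)
  obtain p where "p \<in> zeros_sum A B" and "weakly_converges y p"
    using weakly_convergent_to_zero[OF assms(4)] by blast
  moreover have "x = y \<circ> Suc"
    by (simp add: y_def fun_eq_iff)
  ultimately show ?thesis
    using weakly_converges_subseq[of y p Suc] by (auto simp: strict_mono_Suc_iff)
qed

end
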